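(* Let $\delta>0$ and let $A,B,C,D$ be nonnegative constants with $A\in(0,1)$ and $C>0$. Then there exists a function $\varphi\in C^2((0,\delta])\cap C([0,\delta])$, depending on $A,B,C,D,\delta$, which is positive on $(0,\delta]$, solves $$\varphi''(r)+\Big(\frac{A}{r}+B\Big)\varphi'(r)=-C\qquad\text{for } r\in(0,\delta],$$ and satisfies: (i) $\varphi'(r)>0$ and $\varphi''(r)<0$ for all $r\in(0,\delta]$; (ii) $\varphi''(r)-\dfrac{\varphi'(r)}{r}\le -C$ for all $r\in(0,\delta]$; (iii) $\varphi(\delta)\ge D$; (iv) $\displaystyle\sup_{0<r\le\delta}\frac{\varphi(r)}{r^{1-A}}<+\infty$. *)

theory Defs
  imports "HOL-Analysis.Analysis"
begin

end

theory Submission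
  imports Defs
begin

text \<open>Multiplying by the integrating factor \<open>r^A e^(B r)\<close> turns the equation into
  \<open>(r^A e^(B r) \<phi>')' = -C r^A e^(B r)\<close>. Hence \<open>\<phi>' = r^(-A) g\<close>, where \<open>g\<close> solves the linear
  equation \<open>g' = -B g - C r^A\<close>, and the constant of integration makes \<open>g \<ge> m\<close> on \<open>[0, \<delta>]\<close>
  for any prescribed \<open>m\<close>. As \<open>A < 1\<close>, the weight \<open>r^(-A)\<close> is integrable at 0, and
  \<open>\<phi>(r) = \<integral>_0^r t^(-A) g(t) dt\<close> lies between \<open>m r^(1-A)/(1-A)\<close> and \<open>(max g) r^(1-A)/(1-A)\<close>:
  a large \<open>m\<close> gives (iii), the upper bound gives (iv). Finally \<open>\<phi>'' = -C - (A/r + B) \<phi>' < -C\<close>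
  because \<open>\<phi>' > 0\<close>, which gives (i) and (ii).\<close>

lemma linear_ode_solution_ge:
  fixes f :: "real \<Rightarrow> real" and B m \<delta> :: real
  assumes f_cont: "continuous_on {0..\<delta>} f" and f_nonneg: "\<And>t. t \<in> {0..\<delta>} \<Longrightarrow> 0 \<le> f t"
    and "0 \<le> B" and "0 \<le> m"
  obtains g where "continuous_on {0..\<delta>} g"
    and "\<And>t. t \<in> {0..\<delta>} \<Longrightarrow> (g has_real_derivative - B * g t - f t) (at t within {0..\<delta>})"
    and "\<And>t. t \<in> {0..\<delta>} \<Longrightarrow> m \<le> g t"
proof -
  define F where "F t = integral {0..t} (\<lambda>s. exp (B * s) * f s)" for t
  define g where "g t = exp (- B * t) * (m * exp (B * \<delta>) + F \<delta> - F t)" for t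
  have ef_cont: "continuous_on {0..\<delta>} (\<lambda>s. exp (B * s) * f s)"
    by (intro continuous_intros f_cont)
  have g_deriv: "(g has_real_derivative - B * g t - f t) (at t within {0..\<delta>})"
    if t: "t \<in> {0..\<delta>}" for t
  proof -
    have "(F has_real_derivative exp (B * t) * f t) (at t within {0..\<delta>})"
      unfolding F_def by (rule integral_has_real_derivative[OF ef_cont t])
    then have "(g has_real_derivative - B * g t - exp (- B * t) * (exp (B * t) * f t))
        (at t within {0..\<delta>})"
      unfolding g_def by (auto intro!: derivative_eq_intros simp: algebra_simps)
    moreover have "exp (- B * t) * (exp (B * t) * f t) = f t"
      by (simp add: exp_minus field_simps)
    ultimately show ?thesis by (simp only:)
  qed
  have "m \<le> g t" if t: "t \<in> {0..\<delta>}" for t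
  proof -
    have "F t \<le> F \<delta>" unfolding F_def
      using t f_nonneg continuous_on_subset[OF ef_cont]
      by (intro integral_subset_le integrable_continuous_interval) auto
    then have "m * exp (B * (\<delta> - t)) \<le> g t"
      using \<open>0 \<le> m\<close> by (simp add: g_def right_diff_distrib exp_diff exp_minus field_simps)
    moreover have "m \<le> m * exp (B * (\<delta> - t))"
      using mult_left_mono[of 1 "exp (B * (\<delta> - t))" m] t \<open>0 \<le> B\<close> \<open>0 \<le> m\<close> by simp
    ultimately show ?thesis by linarith
  qed
  moreover have "continuous_on {0..\<delta>} g"
    using g_deriv DERIV_continuous continuous_on_eq_continuous_within by blast
  ultimately show thesis
    using g_deriv that by blast
qed

text \<open>The antiderivative of \<open>r^(a-1) \<psi>(r)\<close> vanishing at 0, written after the substitution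
  \<open>u = r^a\<close>: the integrand \<open>\<psi>(u^(1/a))\<close> stays continuous at 0 even when \<open>a < 1\<close>.\<close>

definition powr_antideriv :: "real \<Rightarrow> (real \<Rightarrow> real) \<Rightarrow> real \<Rightarrow> real" where
  "powr_antideriv a \<psi> r = integral {0..r powr a} (\<lambda>u. \<psi> (u powr (1 / a))) / a"

lemma continuous_on_powr_substitution:
  fixes \<psi> :: "real \<Rightarrow> real"
  assumes "0 < a" and "0 \<le> R" and "continuous_on {0..R} \<psi>"
  shows "continuous_on {0..R powr a} (\<lambda>u. \<psi> (u powr (1 / a)))"
proof -
  have "continuous_on {0..R powr a} (\<lambda>u. u powr (1 / a))"
    using assms by (intro continuous_on_powr' continuous_intros) auto
  moreover have "(\<lambda>u. u powr (1 / a)) ` {0..R powr a} \<subseteq> {0..R}"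
    using assms powr_mono2[of "1 / a" _ "R powr a"] by (auto simp: powr_powr)
  ultimately show ?thesis
    using continuous_on_compose2[OF assms(3)] by blast
qed

lemma continuous_on_powr_antideriv:
  fixes \<psi> :: "real \<Rightarrow> real"
  assumes "0 < a" and "0 \<le> R" and "continuous_on {0..R} \<psi>"
  shows "continuous_on {0..R} (powr_antideriv a \<psi>)"
proof -
  have "continuous_on {0..R powr a} (\<lambda>x. integral {0..x} (\<lambda>u. \<psi> (u powr (1 / a))))"
    using continuous_on_powr_substitution[OF assms]
    by (intro indefinite_integral_continuous_1 integrable_continuous_interval)
  moreover have "continuous_on {0..R} (\<lambda>r. r powr a)"
    using assms by (intro continuous_on_powr' continuous_intros) auto
  moreover have "(\<lambda>r. r powr a) ` {0..R} \<subseteq> {0..R powr a}"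
    using assms by (auto intro!: powr_mono2)
  ultimately have "continuous_on {0..R} (\<lambda>r. integral {0..r powr a} (\<lambda>u. \<psi> (u powr (1 / a))))"
    by (rule continuous_on_compose2)
  then show ?thesis
    unfolding powr_antideriv_def using assms by (intro continuous_intros) auto
qed

lemma has_real_derivative_powr_antideriv:
  fixes \<psi> :: "real \<Rightarrow> real"
  assumes "0 < a" and "continuous_on {0..R} \<psi>" and r: "r \<in> {0<..R}"
  shows "(powr_antideriv a \<psi> has_real_derivative r powr (a - 1) * \<psi> r) (at r within {0<..R})"
proof -
  define h where "h = (\<lambda>u. \<psi> (u powr (1 / a)))"
  have "((\<lambda>x. integral {0..x} h) has_real_derivative h (r powr a)) (at (r powr a) within {0..R powr a})"
    unfolding h_def using assms continuous_on_powr_substitution[OF \<open>0 < a\<close> _ assms(2)]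
    by (intro integral_has_real_derivative) (auto intro: powr_mono2)
  then have "((\<lambda>x. integral {0..x} h) has_real_derivative h (r powr a))
      (at (r powr a) within (\<lambda>r. r powr a) ` {0<..R})"
    by (rule has_field_derivative_subset) (use assms in \<open>auto intro!: powr_mono2\<close>)
  moreover have "((\<lambda>r. r powr a) has_real_derivative a * r powr (a - 1)) (at r within {0<..R})"
    using r by (intro has_field_derivative_at_within[OF has_real_derivative_powr]) auto
  ultimately have "((\<lambda>r. integral {0..r powr a} h / a) has_real_derivative
      h (r powr a) * (a * r powr (a - 1)) / a) (at r within {0<..R})"
    by (intro DERIV_cdivide) (rule DERIV_image_chain[unfolded comp_def])
  moreover have "h (r powr a) = \<psi> r"
    using r \<open>0 < a\<close> by (simp add: h_def powr_powr)
  moreover have "powr_antideriv a \<psi> = (\<lambda>r. integral {0..r powr a} h / a)"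
    by (simp add: fun_eq_iff powr_antideriv_def h_def)
  ultimately show ?thesis
    using \<open>0 < a\<close> by (simp add: mult.commute)
qed

lemma powr_antideriv_bounds:
  fixes \<psi> :: "real \<Rightarrow> real"
  assumes "0 < a" and "0 \<le> r" and "continuous_on {0..r} \<psi>"
    and bounds: "\<And>t. t \<in> {0..r} \<Longrightarrow> m \<le> \<psi> t \<and> \<psi> t \<le> M"
  shows "m * r powr a / a \<le> powr_antideriv a \<psi> r \<and> powr_antideriv a \<psi> r \<le> M * r powr a / a"
proof -
  define h where "h = (\<lambda>u. \<psi> (u powr (1 / a)))"
  have h_int: "h integrable_on {0..r powr a}"
    unfolding h_def using continuous_on_powr_substitution[OF assms(1-3)]
    by (rule integrable_continuous_interval)
  have h_bounds: "m \<le> h u \<and> h u \<le> M" if "u \<in> {0..r powr a}" for u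
    unfolding h_def using that assms powr_mono2[of "1 / a" u "r powr a"]
    by (intro bounds) (auto simp: powr_powr)
  have "integral {0..r powr a} (\<lambda>_. m) \<le> integral {0..r powr a} h"
    using h_int h_bounds by (intro integral_le) auto
  moreover have "integral {0..r powr a} h \<le> integral {0..r powr a} (\<lambda>_. M)"
    using h_int h_bounds by (intro integral_le) auto
  ultimately show ?thesis
    using \<open>0 < a\<close> unfolding powr_antideriv_def h_def[symmetric]
    by (simp add: divide_right_mono mult.commute)
qed

lemma has_real_derivative_powr_mult_radial_ode:
  fixes g :: "real \<Rightarrow> real" and A B C r :: real
  assumes g_deriv: "(g has_real_derivative - B * g r - C * r powr A) (at r within S)" and "0 < r"
  shows "((\<lambda>r. r powr - A * g r) has_real_derivative - C - (A / r + B) * (r powr - A * g r))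
    (at r within S)"
proof -
  have "((\<lambda>r. r powr - A * g r) has_real_derivative
      r powr - A * (- B * g r - C * r powr A) + - A * r powr (- A - 1) * g r) (at r within S)"
    using \<open>0 < r\<close>
    by (intro DERIV_mult' g_deriv has_field_derivative_at_within[OF has_real_derivative_powr])
  moreover have "r powr - A * (- B * g r - C * r powr A) + - A * r powr (- A - 1) * g r
      = - C - (A / r + B) * (r powr - A * g r)"
  proof -
    have "r powr (- A - 1) = r powr - A / r" and "r powr - A * r powr A = 1"
      using \<open>0 < r\<close> by (simp_all add: powr_diff powr_minus)
    then show ?thesis
      using \<open>0 < r\<close> by (simp add: field_simps)
  qed
  ultimately show ?thesis by (simp only:)
qed

lemma radial_ode_solution:
  fixes A B C \<delta> m :: real
  assumes "0 < A" and "A < 1" and "0 \<le> B" and "0 \<le> C" and "0 < \<delta>" and "0 \<le> m"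
  obtains \<phi> \<phi>1 :: "real \<Rightarrow> real" and M :: real
  where "continuous_on {0..\<delta>} \<phi>" and "continuous_on {0<..\<delta>} \<phi>1"
    and "\<And>r. r \<in> {0<..\<delta>} \<Longrightarrow> (\<phi> has_real_derivative \<phi>1 r) (at r within {0<..\<delta>})"
    and "\<And>r. r \<in> {0<..\<delta>} \<Longrightarrow>
      (\<phi>1 has_real_derivative - C - (A / r + B) * \<phi>1 r) (at r within {0<..\<delta>})"
    and "\<And>r. r \<in> {0<..\<delta>} \<Longrightarrow> m * r powr - A \<le> \<phi>1 r"
    and "\<And>r. r \<in> {0..\<delta>} \<Longrightarrow>
      m * r powr (1 - A) / (1 - A) \<le> \<phi> r \<and> \<phi> r \<le> M * r powr (1 - A) / (1 - A)"
proof -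
  define a where "a = 1 - A"
  have a: "0 < a" "- A = a - 1"
    using assms by (auto simp: a_def)
  have "continuous_on {0..\<delta>} (\<lambda>r. C * r powr A)"
    using assms by (intro continuous_intros continuous_on_powr') auto
  then obtain g where g_cont: "continuous_on {0..\<delta>} g"
    and g_deriv: "\<And>r. r \<in> {0..\<delta>} \<Longrightarrow>
      (g has_real_derivative - B * g r - C * r powr A) (at r within {0..\<delta>})"
    and g_ge: "\<And>r. r \<in> {0..\<delta>} \<Longrightarrow> m \<le> g r"
    using linear_ode_solution_ge[of \<delta> "\<lambda>r. C * r powr A" B m] assms by auto
  obtain M where g_le: "\<And>r. r \<in> {0..\<delta>} \<Longrightarrow> g r \<le> M"
    using continuous_attains_sup[OF compact_Icc _ g_cont] assms by fastforce
  show thesis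
  proof (rule that[of "powr_antideriv a g" "\<lambda>r. r powr - A * g r" M])
    show "continuous_on {0..\<delta>} (powr_antideriv a g)"
      using continuous_on_powr_antideriv[OF a(1) _ g_cont] assms by simp
    show "continuous_on {0<..\<delta>} (\<lambda>r. r powr - A * g r)"
      by (intro continuous_intros continuous_on_subset[OF g_cont]) auto
    fix r
    assume r: "r \<in> {0<..\<delta>}"
    show "(powr_antideriv a g has_real_derivative r powr - A * g r) (at r within {0<..\<delta>})"
      unfolding a(2) by (rule has_real_derivative_powr_antideriv[OF a(1) g_cont r])
    have "(g has_real_derivative - B * g r - C * r powr A) (at r within {0<..\<delta>})"
      by (rule has_field_derivative_subset[OF g_deriv]) (use r in auto)
    then show "((\<lambda>r. r powr - A * g r) has_real_derivative
        - C - (A / r + B) * (r powr - A * g r)) (at r within {0<..\<delta>})"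
      by (rule has_real_derivative_powr_mult_radial_ode) (use r in simp)
    show "m * r powr - A \<le> r powr - A * g r"
      using g_ge[of r] r by (simp add: mult.commute)
  next
    fix r
    assume "r \<in> {0..\<delta>}"
    then show "m * r powr (1 - A) / (1 - A) \<le> powr_antideriv a g r \<and>
        powr_antideriv a g r \<le> M * r powr (1 - A) / (1 - A)"
      unfolding a_def[symmetric] using g_ge g_le
      by (intro powr_antideriv_bounds a(1) continuous_on_subset[OF g_cont]) auto
  qed
qed

theorem lemma2p1:
  fixes \<delta> A B C D :: real
  assumes "\<delta> > 0" and "0 < A" and "A < 1" and "B \<ge> 0" and "C > 0" and "D \<ge> 0"
  shows "\<exists>\<phi> \<phi>1 \<phi>2 :: real \<Rightarrow> real.
           continuous_on {0..\<delta>} \<phi> \<and>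
           (\<forall>r\<in>{0<..\<delta>}. (\<phi> has_real_derivative \<phi>1 r) (at r within {0<..\<delta>}) \<and>
                           (\<phi>1 has_real_derivative \<phi>2 r) (at r within {0<..\<delta>})) \<and>
           continuous_on {0<..\<delta>} \<phi>2 \<and>
           (\<forall>r\<in>{0<..\<delta>}. \<phi> r > 0) \<and>
           (\<forall>r\<in>{0<..\<delta>}. \<phi>2 r + (A / r + B) * \<phi>1 r = - C) \<and>
           (\<forall>r\<in>{0<..\<delta>}. \<phi>1 r > 0 \<and> \<phi>2 r < 0) \<and>
           (\<forall>r\<in>{0<..\<delta>}. \<phi>2 r - \<phi>1 r / r \<le> - C) \<and>
           \<phi> \<delta> \<ge> D \<and>
           bdd_above ((\<lambda>r. \<phi> r / r powr (1 - A)) ` {0<..\<delta>})"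
proof -
  define a where "a = 1 - A"
  define m where "m = a * D / \<delta> powr a + 1"
  have a: "0 < a" and "0 < m"
    using assms unfolding m_def a_def by (auto intro!: add_nonneg_pos divide_nonneg_pos)
  obtain \<phi> \<phi>1 M where \<phi>_cont: "continuous_on {0..\<delta>} \<phi>"
    and \<phi>1_cont: "continuous_on {0<..\<delta>} \<phi>1"
    and \<phi>_deriv: "\<And>r. r \<in> {0<..\<delta>} \<Longrightarrow> (\<phi> has_real_derivative \<phi>1 r) (at r within {0<..\<delta>})"
    and \<phi>1_deriv: "\<And>r. r \<in> {0<..\<delta>} \<Longrightarrow>
      (\<phi>1 has_real_derivative - C - (A / r + B) * \<phi>1 r) (at r within {0<..\<delta>})"
    and \<phi>1_ge: "\<And>r. r \<in> {0<..\<delta>} \<Longrightarrow> m * r powr - A \<le> \<phi>1 r"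
    and \<phi>_bounds: "\<And>r. r \<in> {0..\<delta>} \<Longrightarrow> m * r powr a / a \<le> \<phi> r \<and> \<phi> r \<le> M * r powr a / a"
    using radial_ode_solution[of A B C \<delta> m] assms \<open>0 < m\<close> unfolding a_def by auto
  define \<phi>2 where "\<phi>2 r = - C - (A / r + B) * \<phi>1 r" for r
  have \<phi>1_pos: "0 < \<phi>1 r" if "r \<in> {0<..\<delta>}" for r
    using less_le_trans[OF _ \<phi>1_ge[OF that]] \<open>0 < m\<close> that by simp
  have D_le: "D \<le> \<phi> \<delta>"
  proof -
    have "m * \<delta> powr a / a = D + \<delta> powr a / a"
      unfolding m_def using assms a by (simp add: field_simps)
    moreover have "0 < \<delta> powr a / a"
      using assms a by simp
    ultimately show ?thesis
      using \<phi>_bounds[of \<delta>] assms by simp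
  qed
  have ratio_le: "\<phi> r / r powr (1 - A) \<le> M / a" if "r \<in> {0<..\<delta>}" for r
    using \<phi>_bounds[of r] that unfolding a_def[symmetric] by (simp add: pos_divide_le_eq)
  have \<phi>_pos: "0 < \<phi> r" if "r \<in> {0<..\<delta>}" for r
    using less_le_trans[OF _ conjunct1[OF \<phi>_bounds]] that a \<open>0 < m\<close> by simp
  have damping_pos: "0 < (A / r + B) * \<phi>1 r \<and> 0 < \<phi>1 r / r" if "r \<in> {0<..\<delta>}" for r
    using that assms \<phi>1_pos[OF that] by (auto intro!: mult_pos_pos add_pos_nonneg)
  show ?thesis
  proof (rule exI[of _ \<phi>], rule exI[of _ \<phi>1], rule exI[of _ \<phi>2], intro conjI ballI bdd_aboveI2)
    show "continuous_on {0<..\<delta>} \<phi>2"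
      unfolding \<phi>2_def by (intro continuous_intros \<phi>1_cont) auto
    fix r
    assume "r \<in> {0<..\<delta>}"
    then show "\<phi>2 r < 0" and "\<phi>2 r - \<phi>1 r / r \<le> - C"
      using damping_pos[of r] assms by (auto simp: \<phi>2_def)
  qed (use \<phi>_cont \<phi>_deriv \<phi>1_deriv D_le ratio_le \<phi>_pos \<phi>1_pos in \<open>auto simp: \<phi>2_def\<close>)
qed

end
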